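(* In the isotropic setting below, fix $r>0$ and $F,F_p\in\mathrm{GL}^+(3)$, and let $C_p=F_p^TF_p$, $U_p=\sqrt{C_p}$. Then $$-F_p^{-1}\,\mathcal N_r(\Sigma_e)\,F_p^{-T}=-U_p^{-1}\,\mathcal N_r(\mathring\Sigma)\,U_p^{-1}.$$ Consequently, for a differentiable curve $t\mapsto F_p(t)$ at fixed $F$, the Lion flow rule $\frac{d}{dt}[C_p^{-1}]\in-F_p^{-1}\mathcal N_r(\Sigma_e)F_p^{-T}$ holds if and only if the Grandi–Stefanelli flow rule $\sqrt{C_p}\,\frac{d}{dt}[C_p^{-1}]\,\sqrt{C_p}\in-\mathcal N_r(\mathring\Sigma)$ holds; the latter depends on $C$ and $C_p$ only.
   Context: $W:\mathrm{GL}^+(3)\to\mathbb{R}$ objective and isotropic ($W(QFR)=W(F)$, $Q,R\in\mathrm{SO}(3)$), written $W(F_e)=\Psi(I_1(C_e),I_2(C_e),I_3(C_e))$ with $\Psi\in C^1$; $\widetilde W(X)=\Psi(\mathrm{tr}X,\mathrm{tr}(\mathrm{Cof}X),\det X)$. $F_e=FF_p^{-1}$, $C=F^TF$, $C_e=F_e^TF_e$. $\langle X,Y\rangle=\mathrm{tr}(XY^T)$, $\|\cdot\|$ Frobenius norm, $D$ gradient, $\mathrm{dev}_3X=X-\frac13\mathrm{tr}(X)\mathbb{1}$, $\mathrm{sym}X=\frac12(X+X^T)$. $\Sigma_e=F_e^TDW(F_e)$ (symmetric). $\mathring\Sigma:=2\,U_p^{-1}\mathrm{sym}[C\,D\widetilde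 W(CC_p^{-1})]U_p^{-1}$. For $r>0$ and symmetric $S$: $\mathcal N_r(S)=\{0\}$ if $\|\mathrm{dev}_3S\|<r$, $\{\lambda\,\mathrm{dev}_3S/\|\mathrm{dev}_3S\|:\lambda\ge0\}$ if $\|\mathrm{dev}_3S\|=r$, $\emptyset$ if $\|\mathrm{dev}_3S\|>r$ (the subdifferential of the indicator function of $\{\|\mathrm{dev}_3S\|\le r\}$). $M\mathcal AN=\{MXN:X\in\mathcal A\}$. *)

theory Defs
  imports "HOL-Analysis.Analysis"
begin

type_synonym mat3 = "real^3^3"

text \<open>Cofactor matrix: (i,j) entry is the (i,j) cofactor of X.\<close>
definition Cof :: "real^'n^'n \<Rightarrow> real^'n^'n" where
  "Cof X = (\<chi> i j. det (\<chi> k l. if k = i \<and> l = j then 1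
                               else if k = i \<or> l = j then 0 else X $ k $ l))"

definition I1 :: "mat3 \<Rightarrow> real" where "I1 X = trace X"
definition I2 :: "mat3 \<Rightarrow> real" where "I2 X = trace (Cof X)"
definition I3 :: "mat3 \<Rightarrow> real" where "I3 X = det X"

text \<open>The inner product on real^3^3 is the Frobenius product tr(X Y^T);
  the norm is the Frobenius norm.\<close>

definition grad :: "(mat3 \<Rightarrow> real) \<Rightarrow> mat3 \<Rightarrow> mat3" where
  "grad f X = (THE G. (f has_derivative (\<lambda>H. G \<bullet> H)) (at X))"

definition GLplus :: "mat3 set" where "GLplus = {F. det F > 0}"

definition SO3 :: "mat3 set" where
  "SO3 = {Q. transpose Q ** Q = mat 1 \<and> det Q = 1}"

definition sym :: "mat3 \<Rightarrow> mat3" where "sym X = (1/2) *\<^sub>R (X + transpose X)"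

definition dev3 :: "mat3 \<Rightarrow> mat3" where "dev3 X = X - (trace X / 3) *\<^sub>R mat 1"

definition pos_def :: "mat3 \<Rightarrow> bool" where
  "pos_def U \<longleftrightarrow> (\<forall>x. x \<noteq> 0 \<longrightarrow> x \<bullet> (U *v x) > 0)"

definition msqrt :: "mat3 \<Rightarrow> mat3" where
  "msqrt C = (THE U. transpose U = U \<and> pos_def U \<and> U ** U = C)"

text \<open>Normal cone N_r(S) (subdifferential of the indicator of ||dev_3 S|| <= r).\<close>
definition Ncone :: "real \<Rightarrow> mat3 \<Rightarrow> mat3 set" where
  "Ncone r S = (if norm (dev3 S) < r then {0}
               else if norm (dev3 S) = r
                 then {c *\<^sub>R (dev3 S /\<^sub>R norm (dev3 S)) | c. c \<ge> 0}
               else {})"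

definition neg_sandwich :: "mat3 \<Rightarrow> mat3 set \<Rightarrow> mat3 \<Rightarrow> mat3 set" where
  "neg_sandwich M A N = (\<lambda>X. - (M ** X ** N)) ` A"

definition posR3 :: "(real \<times> real \<times> real) set" where
  "posR3 = {x. 0 < fst x \<and> 0 < fst (snd x) \<and> 0 < snd (snd x)}"

definition C1_on :: "(real \<times> real \<times> real) set \<Rightarrow> (real \<times> real \<times> real \<Rightarrow> real) \<Rightarrow> bool" where
  "C1_on S \<Psi> \<longleftrightarrow> (\<exists>D. (\<forall>x\<in>S. (\<Psi> has_derivative blinfun_apply (D x)) (at x))
                     \<and> continuous_on S D)"

definition Wtilde :: "(real \<times> real \<times> real \<Rightarrow> real) \<Rightarrow> mat3 \<Rightarrow> real" where
  "Wtilde \<Psi> X = \<Psi> (trace X, trace (Cof X), det X)"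

definition Sigma_e :: "(mat3 \<Rightarrow> real) \<Rightarrow> mat3 \<Rightarrow> mat3 \<Rightarrow> mat3" where
  "Sigma_e W F Fp = (let Fe = F ** matrix_inv Fp in transpose Fe ** grad W Fe)"

definition Sigma_ring :: "(real \<times> real \<times> real \<Rightarrow> real) \<Rightarrow> mat3 \<Rightarrow> mat3 \<Rightarrow> mat3" where
  "Sigma_ring \<Psi> C Cp = (let Up = msqrt Cp in
      2 *\<^sub>R (matrix_inv Up ** sym (C ** grad (Wtilde \<Psi>) (C ** matrix_inv Cp)) ** matrix_inv Up))"

end

theory Submission
  imports Defs
begin

text \<open>
  Write \<open>F\<^sub>p\<^sup>-\<^sup>1\<close> for the inverse plastic deformation, \<open>C = F\<^sup>T F\<close>, \<open>C\<^sub>p = F\<^sub>p\<^sup>T F\<^sub>p = U\<^sub>p\<^sup>2\<close>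
  with \<open>U\<^sub>p\<close> the symmetric positive definite square root, \<open>G = DW\<^sup>~(C C\<^sub>p\<^sup>-\<^sup>1)\<close> and
  \<open>M = G\<^sup>T C + C G\<close>. The proof has three steps.
  (1) Calculus: \<open>W (Y F\<^sub>p\<^sup>-\<^sup>1) = W\<^sup>~ (Y\<^sup>T Y C\<^sub>p\<^sup>-\<^sup>1)\<close> near \<open>Y = F\<close>, so comparing derivatives gives
      \<open>DW(F\<^sub>e) F\<^sub>p\<^sup>-\<^sup>T = F C\<^sub>p\<^sup>-\<^sup>1 G\<^sup>T + F G C\<^sub>p\<^sup>-\<^sup>1\<close>; and since \<open>W\<^sup>~ (A B) = W\<^sup>~ (B A)\<close> (isotropy),
      \<open>G\<close> commutes with \<open>(C C\<^sub>p\<^sup>-\<^sup>1)\<^sup>T\<close>. Together: \<open>\<Sigma>\<^sub>e = F\<^sub>p\<^sup>-\<^sup>T M F\<^sub>p\<^sup>-\<^sup>1\<close>, while by definition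
      \<open>\<Sigma>\<^sup>o = U\<^sub>p\<^sup>-\<^sup>1 M U\<^sub>p\<^sup>-\<^sup>1\<close>.
  (2) Linear algebra: \<open>R = F\<^sub>p\<^sup>-\<^sup>T U\<^sub>p\<close> is orthogonal, \<open>\<Sigma>\<^sub>e = R \<Sigma>\<^sup>o R\<^sup>T\<close> and \<open>F\<^sub>p\<^sup>-\<^sup>1 R = U\<^sub>p\<^sup>-\<^sup>1\<close>;
      the normal cone is equivariant under orthogonal conjugation, which yields the set identity.
  (3) At each time \<open>t\<close> the flow-rule equivalence is the set identity for \<open>F\<^sub>p(t)\<close> combined with
      \<open>d \<in> -U\<^sup>-\<^sup>1 N U\<^sup>-\<^sup>1 \<longleftrightarrow> U d U \<in> -N\<close>; it holds for any value of the derivative, so neither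
      differentiability of the curve nor objectivity of \<open>W\<close> is needed.
\<close>

subsection \<open>Matrix algebra and the Frobenius product\<close>

lemma matrix_inv_det:
  fixes A :: "real^'n^'n"
  assumes "det A \<noteq> 0"
  shows "A ** matrix_inv A = mat 1 \<and> matrix_inv A ** A = mat 1"
proof -
  have "\<exists>A'. A ** A' = mat 1 \<and> A' ** A = mat 1"
    using assms invertible_det_nz unfolding invertible_def by blast
  then show ?thesis unfolding matrix_inv_def by (rule someI_ex)
qed

lemma matrix_inv_eqI:
  fixes A B :: "real^'n^'n"
  assumes "A ** B = mat 1"
  shows "matrix_inv A = B"
proof -
  have "det A * det B = 1" using assms det_mul[of A B] by simp
  then have "det A \<noteq> 0" by auto
  have "matrix_inv A = matrix_inv A ** (A ** B)" using assms by simp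
  also have "\<dots> = B" using matrix_inv_det[OF \<open>det A \<noteq> 0\<close>] by (simp add: matrix_mul_assoc)
  finally show ?thesis .
qed

lemma inverse_gram:
  fixes Fp :: "real^'n^'n"
  assumes "det Fp \<noteq> 0"
  shows "matrix_inv (transpose Fp ** Fp) = matrix_inv Fp ** transpose (matrix_inv Fp)"
proof (rule matrix_inv_eqI)
  have inv: "Fp ** matrix_inv Fp = mat 1" "matrix_inv Fp ** Fp = mat 1"
    using matrix_inv_det[OF assms] by auto
  have "transpose Fp ** transpose (matrix_inv Fp) = transpose (matrix_inv Fp ** Fp)"
    by (simp add: matrix_transpose_mul)
  then have tinv: "transpose Fp ** transpose (matrix_inv Fp) = mat 1" using inv by simp
  have "(transpose Fp ** Fp) ** (matrix_inv Fp ** transpose (matrix_inv Fp))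
      = transpose Fp ** (Fp ** matrix_inv Fp) ** transpose (matrix_inv Fp)"
    by (simp add: matrix_mul_assoc)
  then show "(transpose Fp ** Fp) ** (matrix_inv Fp ** transpose (matrix_inv Fp)) = mat 1"
    using inv tinv by simp
qed

lemma det_matrix_inv_pos:
  fixes A :: "real^'n^'n"
  assumes "det A > 0"
  shows "det (matrix_inv A) > 0"
proof -
  have "det A * det (matrix_inv A) = 1"
    using matrix_inv_det[of A] assms det_mul[of A "matrix_inv A"] by simp
  then show ?thesis using assms by (metis zero_less_mult_pos zero_less_one)
qed

lemma matrix_mul_add_rdistrib: "((A::'a::semiring_1^'n^'m) + B) ** C = A ** C + B ** C"
  by (simp add: matrix_matrix_mult_def vec_eq_iff sum.distrib algebra_simps)

lemma matrix_mul_diff_ldistrib: "(A::'a::ring_1^'n^'m) ** (B - C) = A ** B - A ** C"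
  by (simp add: matrix_matrix_mult_def vec_eq_iff sum_subtractf algebra_simps)

lemma matrix_mul_diff_rdistrib: "((A::'a::ring_1^'n^'m) - B) ** C = A ** C - B ** C"
  by (simp add: matrix_matrix_mult_def vec_eq_iff sum_subtractf algebra_simps)

lemma matrix_mul_neg_left: "(- (A::'a::ring_1^'n^'m)) ** B = - (A ** B)"
  by (simp add: matrix_matrix_mult_def vec_eq_iff sum_negf)

lemma matrix_mul_neg_right: "(A::'a::ring_1^'n^'m) ** (- B) = - (A ** B)"
  by (simp add: matrix_matrix_mult_def vec_eq_iff sum_negf)

lemma transpose_add: "transpose ((A::'a::semiring_1^'n^'m) + B) = transpose A + transpose B"
  by (simp add: transpose_def vec_eq_iff)

lemma transpose_diff: "transpose ((A::'a::ring_1^'n^'m) - B) = transpose A - transpose B"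
  by (simp add: transpose_def vec_eq_iff)

lemma trace_transpose: "trace (transpose (A::'a::semiring_1^'n^'n)) = trace A"
  by (simp add: trace_def transpose_def)

lemma inner_matrix_trace: "(A::real^'n^'n) \<bullet> B = trace (transpose A ** B)"
  unfolding inner_vec_def trace_def matrix_matrix_mult_def transpose_def
  by (simp add: inner_real_def) (rule sum.swap)

lemma inner_matrix_mult_right: "(A::real^'n^'n) \<bullet> ((B::real^'n^'n) ** (C::real^'n^'n)) = (transpose B ** A) \<bullet> C"
proof -
  have "(transpose B ** A) \<bullet> C = trace (transpose (transpose B ** A) ** C)"
    by (rule inner_matrix_trace)
  also have "\<dots> = trace (transpose A ** (B ** C))"
    by (simp add: matrix_transpose_mul matrix_mul_assoc)
  finally show ?thesis by (simp add: inner_matrix_trace)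
qed

lemma inner_matrix_mult_left: "(A::real^'n^'n) \<bullet> ((B::real^'n^'n) ** (C::real^'n^'n)) = (A ** transpose C) \<bullet> B"
proof -
  have "trace (transpose A ** (B ** C)) = trace (C ** (transpose A ** B))"
    using trace_mul_sym[of "transpose A ** B" C] by (simp add: matrix_mul_assoc)
  also have "\<dots> = trace (transpose (A ** transpose C) ** B)"
    by (simp add: matrix_transpose_mul matrix_mul_assoc)
  finally show ?thesis by (simp add: inner_matrix_trace)
qed

lemma inner_matrix_transpose: "(A::real^'n^'n) \<bullet> transpose B = transpose A \<bullet> B"
proof -
  have "trace (transpose A ** transpose B) = trace (A ** B)"
    by (metis matrix_transpose_mul trace_mul_sym trace_transpose)
  then show ?thesis by (simp add: inner_matrix_trace)
qed

subsection \<open>Spectral theorem for symmetric 3-by-3 matrices\<close>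

lemma symmetric_matrix_inner:
  fixes A :: "real^'n^'n"
  assumes "transpose A = A"
  shows "(A *v x) \<bullet> y = x \<bullet> (A *v y)"
  by (metis assms dot_lmul_matrix vector_transpose_matrix)

text \<open>On the unit sphere of a nonzero subspace the quadratic form of \<open>A\<close> attains its maximum
  (compactness), giving a vector \<open>v\<close> with \<open>y\<^sup>T A y \<le> (v\<^sup>T A v) |y|\<^sup>2\<close> on the subspace.\<close>
lemma rayleigh_maximizer_exists:
  fixes A :: "real^'n^'n" and S :: "(real^'n) set"
  assumes S: "subspace S" "x0 \<in> S" "x0 \<noteq> 0"
  shows "\<exists>v\<in>S. norm v = 1 \<and> (\<forall>y\<in>S. y \<bullet> (A *v y) \<le> (v \<bullet> (A *v v)) * (y \<bullet> y))"
proof -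
  define K where "K = S \<inter> sphere 0 1"
  define f where "f x = x \<bullet> (A *v x)" for x :: "real^'n"
  have unit: "y /\<^sub>R norm y \<in> K" if "y \<in> S" "y \<noteq> 0" for y
    unfolding K_def using that S(1) by (auto simp: subspace_scale)
  have "compact K" unfolding K_def
    using closed_subspace[OF S(1)] compact_sphere closed_Int_compact by blast
  moreover have "K \<noteq> {}" using unit[OF S(2,3)] by auto
  moreover have "continuous_on K f" unfolding f_def
    by (intro continuous_intros linear_continuous_on matrix_vector_mul_bounded_linear)
  ultimately obtain v where vK: "v \<in> K" and vmax: "\<forall>y\<in>K. f y \<le> f v"
    using continuous_attains_sup[of K f] by blast
  have "f y \<le> f v * (y \<bullet> y)" if "y \<in> S" for y
  proof (cases "y = 0")
    case True then show ?thesis by (simp add: f_def)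
  next
    case False
    have "f (y /\<^sub>R norm y) = f y / (norm y)^2"
      unfolding f_def by (simp add: matrix_vector_mult_scaleR power2_eq_square divide_inverse)
    then have "f y / (norm y)^2 \<le> f v" using vmax unit[OF that False] by auto
    then show ?thesis using False by (simp add: dot_square_norm pos_divide_le_eq)
  qed
  then show ?thesis using vK unfolding K_def f_def by auto
qed

text \<open>If \<open>2 t a \<le> c t\<^sup>2\<close> for all real \<open>t\<close> and \<open>a \<ge> 0\<close>, then \<open>a = 0\<close> (take \<open>t\<close> small and positive).
  This is the first-order condition at a maximum of a quadratic function.\<close>
lemma linear_le_quadratic_imp_zero:
  fixes a c :: real
  assumes "0 \<le> a" and le: "\<And>t. 2 * t * a \<le> t^2 * c"
  shows "a = 0"
proof (rule ccontr)
  assume "a \<noteq> 0"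
  then have pos: "a > 0" using assms(1) by simp
  define t where "t = a / (\<bar>c\<bar> + 1)"
  have tpos: "t > 0" using pos unfolding t_def by simp
  have "2 * a \<le> t * c" using le[of t] tpos by (simp add: power2_eq_square)
  moreover have "t * c \<le> t * \<bar>c\<bar>" using tpos by (simp add: mult_left_mono)
  moreover have "t * \<bar>c\<bar> < a" unfolding t_def using pos by (simp add: divide_less_eq field_simps)
  ultimately show False using pos by linarith
qed

text \<open>A unit vector maximising the Rayleigh quotient of a symmetric matrix on an
  invariant subspace is an eigenvector: for \<open>w = A v - (v\<^sup>T A v) v\<close>, maximality along \<open>v + t w\<close>
  gives \<open>2 t |w|\<^sup>2 \<le> c t\<^sup>2\<close> for all \<open>t\<close>, so \<open>w = 0\<close>.\<close>
lemma rayleigh_maximizer_eigenvector: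
  fixes A :: "real^'n^'n" and S :: "(real^'n) set"
  assumes sA: "transpose A = A" and S: "subspace S" and inv: "\<forall>x\<in>S. A *v x \<in> S"
    and vS: "v \<in> S" and nv: "norm v = 1"
    and vmax: "\<forall>y\<in>S. y \<bullet> (A *v y) \<le> (v \<bullet> (A *v v)) * (y \<bullet> y)"
  shows "A *v v = (v \<bullet> (A *v v)) *\<^sub>R v"
proof -
  define l where "l = v \<bullet> (A *v v)"
  define w where "w = A *v v - l *\<^sub>R v"
  have vv: "v \<bullet> v = 1" using nv by (simp add: dot_square_norm)
  have wS: "w \<in> S" unfolding w_def using inv vS S by (simp add: subspace_diff subspace_scale)
  have vw: "v \<bullet> w = 0" unfolding w_def l_def using vv by (simp add: inner_diff_right)
  have wAv: "w \<bullet> (A *v v) = w \<bullet> w"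
    using vw unfolding w_def by (simp add: inner_diff_left inner_diff_right inner_commute)
  have Avw: "v \<bullet> (A *v w) = w \<bullet> (A *v v)"
    using symmetric_matrix_inner[OF sA, of v w] by (simp add: inner_commute)
  have expand: "2 * t * (w \<bullet> w) \<le> t^2 * (l * (w \<bullet> w) - w \<bullet> (A *v w))" for t :: real
  proof -
    have "v + t *\<^sub>R w \<in> S" using vS wS S by (simp add: subspace_add subspace_scale)
    then have "(v + t *\<^sub>R w) \<bullet> (A *v (v + t *\<^sub>R w)) \<le> l * ((v + t *\<^sub>R w) \<bullet> (v + t *\<^sub>R w))"
      using vmax unfolding l_def by blast
    then show ?thesis
      using vv vw wAv Avw unfolding l_def
      by (simp add: matrix_vector_right_distrib matrix_vector_mult_scaleR inner_add_left
          inner_add_right inner_commute power2_eq_square algebra_simps)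
  qed
  have "w \<bullet> w = 0" by (rule linear_le_quadratic_imp_zero[OF inner_ge_zero expand])
  then show ?thesis unfolding w_def l_def by simp
qed

lemma symmetric_eigenvector_in_subspace:
  fixes A :: "real^'n^'n" and S :: "(real^'n) set"
  assumes "transpose A = A" and "subspace S" and "x0 \<in> S" "x0 \<noteq> 0"
    and "\<forall>x\<in>S. A *v x \<in> S"
  shows "\<exists>v\<in>S. norm v = 1 \<and> A *v v = (v \<bullet> (A *v v)) *\<^sub>R v"
  using rayleigh_maximizer_exists[OF assms(2-4), of A] rayleigh_maximizer_eigenvector[OF assms(1,2,5)]
  by blast

text \<open>Three mutually orthogonal unit eigenvectors, found successively in the whole space, in the
  orthogonal complement of the first one, and in the line orthogonal to the first two.\<close>
lemma symmetric_orthonormal_eigenbasis3: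
  fixes A :: mat3
  assumes sA: "transpose A = A"
  shows "\<exists>(v :: 3 \<Rightarrow> real^3) l. (\<forall>i. A *v v i = l i *\<^sub>R v i) \<and> (\<forall>i j. v i \<bullet> v j = (if i = j then 1 else 0))"
proof -
  have invariant_orth: "\<forall>x\<in>{x. u \<bullet> x = 0}. A *v x \<in> {x. u \<bullet> x = 0}"
    if "A *v u = c *\<^sub>R u" for u c
  proof
    fix x assume "x \<in> {x. u \<bullet> x = 0}"
    moreover have "u \<bullet> (A *v x) = (A *v u) \<bullet> x" by (simp add: symmetric_matrix_inner[OF sA])
    ultimately show "A *v x \<in> {x. u \<bullet> x = 0}" using that by simp
  qed
  obtain v1 where n1: "norm v1 = 1" and e1: "A *v v1 = (v1 \<bullet> (A *v v1)) *\<^sub>R v1"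
    using symmetric_eigenvector_in_subspace[OF sA subspace_UNIV, of "axis 1 1"]
    by (auto simp: axis_eq_0_iff)
  then obtain e where ce: "cross3 v1 e \<noteq> 0" using cross_basis_nonzero[of v1] by fastforce
  obtain v2 where o12: "v1 \<bullet> v2 = 0" and n2: "norm v2 = 1"
    and e2: "A *v v2 = (v2 \<bullet> (A *v v2)) *\<^sub>R v2"
    using symmetric_eigenvector_in_subspace[OF sA subspace_hyperplane, of "cross3 v1 e" v1]
      ce invariant_orth[OF e1] dot_cross_self(1)[of v1 e] by auto
  define S where "S = {x. v1 \<bullet> x = 0} \<inter> {x. v2 \<bullet> x = 0}"
  have "cross3 v1 v2 \<in> S" unfolding S_def
    using dot_cross_self(1,3)[of v1 v2] by (simp add: inner_commute)
  moreover have "(norm (cross3 v1 v2))^2 = 1" using norm_cross[of v1 v2] n1 n2 o12 by simp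
  then have "cross3 v1 v2 \<noteq> 0" by auto
  moreover have "\<forall>x\<in>S. A *v x \<in> S"
    using invariant_orth[OF e1] invariant_orth[OF e2] unfolding S_def by blast
  ultimately obtain v3 where v3S: "v3 \<in> S" and n3: "norm v3 = 1"
    and e3: "A *v v3 = (v3 \<bullet> (A *v v3)) *\<^sub>R v3"
    using symmetric_eigenvector_in_subspace[OF sA, of S] unfolding S_def
    by (metis subspace_hyperplane subspace_inter)
  define v where "v i = (if i = 1 then v1 else if i = 2 then v2 else v3)" for i :: 3
  define l where "l i = v i \<bullet> (A *v v i)" for i
  have "A *v v i = l i *\<^sub>R v i" for i unfolding l_def v_def using e1 e2 e3 by auto
  moreover have "v i \<bullet> v j = (if i = j then 1 else 0)" for i j
  proof -
    have unit: "x \<bullet> x = 1" if "norm x = 1" for x :: "real^3"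
      using that by (simp add: dot_square_norm)
    show ?thesis
      using exhaust_3[of i] exhaust_3[of j] unit[OF n1] unit[OF n2] unit[OF n3] o12 v3S
      unfolding v_def S_def by (auto simp: inner_commute)
  qed
  ultimately show ?thesis by blast
qed

definition diag_mat :: "('n \<Rightarrow> real) \<Rightarrow> real^'n^'n" where
  "diag_mat l = (\<chi> i j. if i = j then l i else 0)"

lemma diag_mat_mult: "diag_mat a ** diag_mat b = diag_mat (\<lambda>i. a i * b i)"
proof -
  have "(\<Sum>k\<in>UNIV. (if i = k then a i else 0) * (if k = j then b k else 0))
      = (\<Sum>k\<in>UNIV. if k = i then (if i = j then a i * b i else 0) else 0)" for i j
    by (rule sum.cong) auto
  then show ?thesis unfolding diag_mat_def matrix_matrix_mult_def by (simp add: vec_eq_iff)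
qed

lemma diag_mat_transpose: "transpose (diag_mat a) = diag_mat a"
  unfolding diag_mat_def transpose_def by (simp add: vec_eq_iff)

lemma diag_mat_quadratic_form: "y \<bullet> (diag_mat a *v y) = (\<Sum>i\<in>UNIV. a i * (y $ i)^2)"
  unfolding diag_mat_def matrix_vector_mult_def inner_vec_def
  by (simp add: if_distrib if_distribR sum.delta power2_eq_square algebra_simps cong: if_cong)

lemma spectral3:
  fixes A :: mat3
  assumes sA: "transpose A = A"
  obtains Q l where "orthogonal_matrix Q" and "A = Q ** diag_mat l ** transpose Q"
    and "pos_def A \<Longrightarrow> \<forall>i. l i > 0"
proof -
  obtain v :: "3 \<Rightarrow> real^3" and l :: "3 \<Rightarrow> real" where ev: "\<forall>i. A *v v i = l i *\<^sub>R v i"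
    and on: "\<forall>i j. v i \<bullet> v j = (if i = j then 1 else 0)"
    using symmetric_orthonormal_eigenbasis3[OF sA] by blast
  define Q :: mat3 where "Q = (\<chi> i j. v j $ i)"
  have "transpose Q ** Q = mat 1"
    unfolding Q_def transpose_def matrix_matrix_mult_def mat_def
    using on by (simp add: vec_eq_iff inner_vec_def)
  then have oQ: "orthogonal_matrix Q" by (simp add: orthogonal_matrix)
  have "A ** Q = Q ** diag_mat l"
    unfolding Q_def diag_mat_def matrix_matrix_mult_def
    using ev by (simp add: vec_eq_iff matrix_vector_mult_def if_distrib if_distribR sum.delta
        mult.commute cong: if_cong)
  then have "A = Q ** diag_mat l ** transpose Q"
    using oQ by (metis matrix_mul_assoc matrix_mul_rid orthogonal_matrix_def)
  moreover have "\<forall>i. l i > 0" if "pos_def A"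
  proof
    fix i
    have "v i \<noteq> 0" using on by (metis inner_zero_left zero_neq_one)
    then have "0 < v i \<bullet> (A *v v i)" using that unfolding pos_def_def by blast
    then show "l i > 0" using ev on by simp
  qed
  ultimately show ?thesis using oQ that by blast
qed

subsection \<open>The symmetric positive definite square root\<close>

lemma pos_def_orthogonal_diag:
  fixes Q :: mat3
  assumes oQ: "orthogonal_matrix Q" and spos: "\<forall>i. s i > 0"
  shows "pos_def (Q ** diag_mat s ** transpose Q)"
  unfolding pos_def_def
proof (intro allI impI)
  fix x :: "real^3" assume "x \<noteq> 0"
  define y where "y = transpose Q *v x"
  have "Q *v y = x" using oQ unfolding y_def orthogonal_matrix_def
    by (simp only: matrix_vector_mul_assoc matrix_vector_mul_lid)
  then obtain k where yk: "y $ k \<noteq> 0" using \<open>x \<noteq> 0\<close> by (metis matrix_vector_mult_0_right vec_eq_iff zero_index)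
  have "x \<bullet> ((Q ** diag_mat s ** transpose Q) *v x) = (x v* Q) \<bullet> (diag_mat s *v y)"
    unfolding y_def by (simp add: dot_lmul_matrix matrix_vector_mul_assoc[symmetric])
  also have "\<dots> = (\<Sum>i\<in>UNIV. s i * (y $ i)^2)"
    unfolding y_def by (simp add: diag_mat_quadratic_form)
  also have "\<dots> > 0"
  proof -
    have "0 < s k * (y $ k)^2" using spos yk by simp
    also have "\<dots> \<le> (\<Sum>i\<in>UNIV. s i * (y $ i)^2)"
    proof (rule member_le_sum)
      show "0 \<le> s i * (y $ i)^2" for i by (intro mult_nonneg_nonneg) (simp_all add: spos less_imp_le)
    qed simp_all
    finally show ?thesis .
  qed
  finally show "0 < x \<bullet> ((Q ** diag_mat s ** transpose Q) *v x)" .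
qed

text \<open>Existence of the square root: \<open>Q diag(\<surd>l) Q\<^sup>T\<close> where \<open>A = Q diag(l) Q\<^sup>T\<close>.\<close>
lemma symmetric_pos_def_sqrt_exists:
  fixes A :: mat3
  assumes sA: "transpose A = A" and pA: "pos_def A"
  shows "\<exists>U. transpose U = U \<and> pos_def U \<and> U ** U = A"
proof -
  obtain Q l where oQ: "orthogonal_matrix Q" and Aeq: "A = Q ** diag_mat l ** transpose Q"
    and lpos: "\<forall>i. l i > 0"
    using spectral3[OF sA] pA by metis
  define U where "U = Q ** diag_mat (\<lambda>i. sqrt (l i)) ** transpose Q"
  have "transpose U = U" unfolding U_def
    by (simp add: matrix_transpose_mul diag_mat_transpose matrix_mul_assoc)
  moreover have "U ** U = A"
  proof -
    have "diag_mat (\<lambda>i. sqrt (l i)) ** diag_mat (\<lambda>i. sqrt (l i)) = diag_mat l"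
      using lpos by (simp add: diag_mat_mult less_imp_le)
    moreover have "U ** U = Q ** (diag_mat (\<lambda>i. sqrt (l i)) ** (transpose Q ** Q)
                     ** diag_mat (\<lambda>i. sqrt (l i))) ** transpose Q"
      unfolding U_def by (simp add: matrix_mul_assoc)
    ultimately have "U ** U = Q ** diag_mat l ** transpose Q"
      using oQ by (simp add: orthogonal_matrix_def)
    then show ?thesis using Aeq by simp
  qed
  moreover have "pos_def U" unfolding U_def using oQ lpos by (simp add: pos_def_orthogonal_diag)
  ultimately show ?thesis by blast
qed

lemma trace_congruence_quadratic:
  "trace (transpose (D::mat3) ** U ** D) = (\<Sum>i\<in>UNIV. column i D \<bullet> (U *v column i D))"
  unfolding trace_def matrix_matrix_mult_def transpose_def column_def inner_vec_def
    matrix_vector_mult_def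
  by (simp add: sum_3 algebra_simps)

text \<open>For positive definite \<open>U\<close>, \<open>tr (D\<^sup>T U D)\<close> is a sum of positive quadratic forms of the
  columns of \<open>D\<close>: it is nonnegative and vanishes only for \<open>D = 0\<close>.\<close>
lemma pos_def_trace_congruence:
  fixes D U :: mat3
  assumes pU: "pos_def U"
  shows "0 \<le> trace (transpose D ** U ** D)"
    and "trace (transpose D ** U ** D) = 0 \<Longrightarrow> D = 0"
proof -
  have nn: "\<forall>i\<in>UNIV. 0 \<le> column i D \<bullet> (U *v column i D)"
    using pU unfolding pos_def_def by (metis inner_zero_left order_less_imp_le order_refl)
  then show "0 \<le> trace (transpose D ** U ** D)"
    unfolding trace_congruence_quadratic by (simp add: sum_nonneg)
  assume "trace (transpose D ** U ** D) = 0"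
  then have "\<forall>i. column i D \<bullet> (U *v column i D) = 0"
    using nn unfolding trace_congruence_quadratic by (simp add: sum_nonneg_eq_0_iff)
  then have "\<forall>i. column i D = 0" using pU unfolding pos_def_def by (metis less_irrefl)
  then show "D = 0" by (simp add: column_def vec_eq_iff)
qed

text \<open>Uniqueness of the square root: for \<open>D = U - V\<close> one has \<open>U D + D V = U\<^sup>2 - V\<^sup>2 = 0\<close>,
  whence \<open>tr (D U D) + tr (D V D) = 0\<close> and both nonnegative terms vanish.\<close>
lemma symmetric_pos_def_sqrt_unique:
  fixes U V :: mat3
  assumes sU: "transpose U = U" and pU: "pos_def U" and sV: "transpose V = V" and pV: "pos_def V"
    and eq: "U ** U = V ** V"
  shows "U = V"
proof -
  define D where "D = U - V"
  have sD: "transpose D = D" unfolding D_def using sU sV by (simp add: transpose_diff)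
  have "U ** D + D ** V = 0"
    using eq unfolding D_def by (simp add: matrix_mul_diff_ldistrib matrix_mul_diff_rdistrib)
  then have "trace (D ** (U ** D) + D ** (D ** V)) = 0"
    by (metis matrix_add_ldistrib times0_right trace_0 mat_0)
  moreover have "trace (D ** (D ** V)) = trace (D ** V ** D)"
    using trace_mul_sym[of D "D ** V"] by (simp add: matrix_mul_assoc)
  ultimately have "trace (transpose D ** U ** D) + trace (transpose D ** V ** D) = 0"
    using sD by (simp add: trace_add matrix_mul_assoc)
  then have "trace (transpose D ** U ** D) = 0"
    using pos_def_trace_congruence(1)[OF pU, of D] pos_def_trace_congruence(1)[OF pV, of D] by linarith
  then have "U - V = 0" using pos_def_trace_congruence(2)[OF pU] unfolding D_def by blast
  then show ?thesis by simp
qed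

text \<open>Hence \<open>msqrt\<close>, defined by a definite description, is the symmetric positive definite
  square root.\<close>
lemma msqrt_props:
  fixes A :: mat3
  assumes "transpose A = A" and "pos_def A"
  shows "transpose (msqrt A) = msqrt A \<and> pos_def (msqrt A) \<and> msqrt A ** msqrt A = A"
proof -
  obtain U where U: "transpose U = U \<and> pos_def U \<and> U ** U = A"
    using symmetric_pos_def_sqrt_exists[OF assms] by blast
  have "msqrt A = U" unfolding msqrt_def
    by (rule the_equality) (use U symmetric_pos_def_sqrt_unique in auto)
  then show ?thesis using U by simp
qed

lemma gram_symmetric_pos_def:
  fixes F :: mat3
  assumes "det F \<noteq> 0"
  shows "transpose (transpose F ** F) = transpose F ** F" and "pos_def (transpose F ** F)"
proof -
  show "transpose (transpose F ** F) = transpose F ** F" by (simp add: matrix_transpose_mul)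
  show "pos_def (transpose F ** F)" unfolding pos_def_def
  proof (intro allI impI)
    fix x :: "real^3" assume "x \<noteq> 0"
    then have "F *v x \<noteq> 0"
      using assms invertible_det_nz matrix_left_invertible_ker invertible_def by blast
    moreover have "x \<bullet> ((transpose F ** F) *v x) = (F *v x) \<bullet> (F *v x)"
      by (metis dot_lmul_matrix matrix_vector_mul_assoc vector_transpose_matrix)
    ultimately show "0 < x \<bullet> ((transpose F ** F) *v x)" by simp
  qed
qed

lemma msqrt_gram:
  fixes Fp :: mat3
  assumes dFp: "det Fp \<noteq> 0"
  defines "U \<equiv> msqrt (transpose Fp ** Fp)"
  shows "transpose U = U" "U ** matrix_inv U = mat 1" "matrix_inv U ** U = mat 1"
    "transpose (matrix_inv U) = matrix_inv U"
    "matrix_inv (transpose Fp ** Fp) = matrix_inv U ** matrix_inv U"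
proof -
  have sU: "transpose U = U" and UU: "U ** U = transpose Fp ** Fp"
    unfolding U_def using msqrt_props gram_symmetric_pos_def[OF dFp] by blast+
  then show "transpose U = U" by simp
  have "det U * det U = det Fp * det Fp" using UU det_mul[of U U] det_mul[of "transpose Fp" Fp] by simp
  then have "det U \<noteq> 0" using dFp by auto
  then show inv1: "U ** matrix_inv U = mat 1" and inv2: "matrix_inv U ** U = mat 1"
    using matrix_inv_det by auto
  have "U ** transpose (matrix_inv U) = mat 1"
    using arg_cong[OF inv2, of transpose] sU by (simp add: matrix_transpose_mul)
  then show "transpose (matrix_inv U) = matrix_inv U" using matrix_inv_eqI by metis
  have "(U ** U) ** (matrix_inv U ** matrix_inv U) = U ** (U ** matrix_inv U) ** matrix_inv U"
    by (simp add: matrix_mul_assoc)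
  then have "(transpose Fp ** Fp) ** (matrix_inv U ** matrix_inv U) = mat 1" using inv1 UU by simp
  then show "matrix_inv (transpose Fp ** Fp) = matrix_inv U ** matrix_inv U" by (rule matrix_inv_eqI)
qed

subsection \<open>Principal invariants\<close>

definition invariants :: "mat3 \<Rightarrow> real \<times> real \<times> real" where
  "invariants Y = (trace Y, trace (Cof Y), det Y)"

lemma Wtilde_invariants: "Wtilde \<Psi> X = \<Psi> (invariants X)"
  by (simp add: Wtilde_def invariants_def)

lemma trace_Cof: "trace (Cof (X::mat3)) = ((trace X)^2 - trace (X ** X)) / 2"
  unfolding Cof_def trace_def sum_3 matrix_matrix_mult_def
  by (simp add: det_3 sum_3 power2_eq_square algebra_simps)

text \<open>\<open>AB\<close> and \<open>BA\<close> have the same principal invariants; this is the form in which the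
  isotropy of \<open>W\<close> enters the argument.\<close>
lemma invariants_commute: "invariants ((A::mat3) ** B) = invariants (B ** A)"
proof -
  have "trace ((A ** B) ** (A ** B)) = trace (A ** (B ** A ** B))" by (simp add: matrix_mul_assoc)
  also have "\<dots> = trace ((B ** A ** B) ** A)" by (rule trace_mul_sym)
  also have "\<dots> = trace ((B ** A) ** (B ** A))" by (simp add: matrix_mul_assoc)
  finally show ?thesis
    unfolding invariants_def trace_Cof by (simp add: trace_mul_sym[of A B] det_mul mult.commute)
qed

lemma Wtilde_commute: "Wtilde \<Psi> ((A::mat3) ** B) = Wtilde \<Psi> (B ** A)"
  by (simp add: Wtilde_invariants invariants_commute)

text \<open>The invariants of a symmetric positive definite matrix are the elementary symmetric
  functions of its positive eigenvalues, so they lie in the domain \<open>posR3\<close> of \<open>\<Psi>\<close>.\<close>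
lemma invariants_pos:
  fixes M :: mat3
  assumes sM: "transpose M = M" and pM: "pos_def M"
  shows "invariants M \<in> posR3"
proof -
  obtain Q l where oQ: "orthogonal_matrix Q" and Meq: "M = Q ** diag_mat l ** transpose Q"
    and lpos: "\<forall>i. l i > 0"
    using spectral3[OF sM] pM by metis
  have "invariants M = invariants (transpose Q ** (Q ** diag_mat l))"
    unfolding Meq by (rule invariants_commute)
  also have "\<dots> = invariants (diag_mat l)"
    using oQ by (simp add: orthogonal_matrix_def matrix_mul_assoc)
  also have "\<dots> = (l 1 + l 2 + l 3, l 1 * l 2 + l 1 * l 3 + l 2 * l 3, l 1 * l 2 * l 3)"
    unfolding invariants_def trace_Cof diag_mat_mult
    by (simp add: diag_mat_def trace_def sum_3 det_3 power2_eq_square algebra_simps)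
  finally show ?thesis
    using lpos by (simp add: posR3_def add_pos_pos)
qed

lemma W_eq_Wtilde_gram:
  assumes W_Psi: "\<forall>Fe. det Fe > 0 \<longrightarrow>
        W Fe = \<Psi> (I1 (transpose Fe ** Fe), I2 (transpose Fe ** Fe), I3 (transpose Fe ** Fe))"
    and "det Y > 0"
  shows "W Y = Wtilde \<Psi> (transpose Y ** Y)"
  using assms by (simp add: Wtilde_def I1_def I2_def I3_def)

subsection \<open>Differentiability and gradients\<close>

lemma entry_differentiable: "(\<lambda>Y::real^'n^'m. Y $ i $ j) differentiable F"
  by (rule bounded_linear_imp_differentiable)
     (rule bounded_linear_compose[OF bounded_linear_vec_nth bounded_linear_vec_nth])

lemma det_differentiable: "(\<lambda>Y::mat3. det Y) differentiable (at Y0)"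
  unfolding det_3 by (simp add: entry_differentiable)

lemma invariants_differentiable: "invariants differentiable (at (Y0::mat3))"
proof -
  have tr: "(\<lambda>Y::mat3. trace Y) differentiable (at Y0)"
    unfolding trace_def by (simp add: entry_differentiable)
  have "(\<lambda>Y::mat3. trace (Y ** Y)) = (\<lambda>Y. \<Sum>i\<in>UNIV. \<Sum>k\<in>UNIV. Y$i$k * Y$k$i)"
    by (simp add: trace_def matrix_matrix_mult_def fun_eq_iff)
  then have trsq: "(\<lambda>Y::mat3. trace (Y ** Y)) differentiable (at Y0)"
    by (simp add: entry_differentiable)
  have "(\<lambda>Y::mat3. trace (Cof Y)) = (\<lambda>Y. ((trace Y)^2 - trace (Y ** Y)) * (1/2))"
    by (simp add: fun_eq_iff trace_Cof)
  then have "(\<lambda>Y::mat3. trace (Cof Y)) differentiable (at Y0)" using tr trsq by simp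
  then show ?thesis unfolding invariants_def using tr det_differentiable by simp
qed

lemma Wtilde_differentiable:
  assumes "C1_on posR3 \<Psi>" and "invariants X \<in> posR3"
  shows "Wtilde \<Psi> differentiable (at X)"
proof -
  have "\<Psi> differentiable (at (invariants X))"
    using assms unfolding C1_on_def differentiable_def by blast
  moreover have "Wtilde \<Psi> = (\<lambda>Y. \<Psi> (invariants Y))" by (simp add: fun_eq_iff Wtilde_invariants)
  ultimately show ?thesis
    using differentiable_compose[of \<Psi> invariants X UNIV] invariants_differentiable by simp
qed

text \<open>\<open>GL\<^sup>+(3)\<close> is open, so identities valid on it can be differentiated.\<close>
lemma open_det_pos: "open {Y::mat3. 0 < det Y}"
proof -
  have "isCont det Y" for Y :: mat3
    using differentiable_imp_continuous_within det_differentiable by (metis (no_types) eta_contract_eq)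
  then have "continuous_on UNIV (det :: mat3 \<Rightarrow> real)"
    by (simp add: continuous_at_imp_continuous_on)
  then show ?thesis using open_Collect_less[of "\<lambda>_. 0" det] by simp
qed

lemma bounded_linear_transpose: "bounded_linear (transpose :: real^'n^'n \<Rightarrow> real^'n^'n)"
  unfolding linear_conv_bounded_linear[symmetric]
  by (rule linearI) (simp_all add: transpose_add transpose_scalar)

lemma bounded_bilinear_matrix_mult: "bounded_bilinear (\<lambda>(A::real^'n^'n) (B::real^'n^'n). A ** B)"
  unfolding bilinear_conv_bounded_bilinear[symmetric] bilinear_def
  by (auto intro!: linearI simp: matrix_add_ldistrib matrix_mul_add_rdistrib matrix_scalar_ac
      scalar_matrix_assoc)

lemma gram_has_derivative:
  fixes M F :: "real^'n^'n"
  shows "((\<lambda>Y. transpose Y ** Y ** M) has_derivative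
           (\<lambda>H. (transpose H ** F + transpose F ** H) ** M)) (at F)"
proof -
  have "((\<lambda>Y. transpose Y ** Y) has_derivative (\<lambda>H. transpose F ** H + transpose H ** F)) (at F)"
    using bounded_bilinear.FDERIV[OF bounded_bilinear_matrix_mult
        bounded_linear_imp_has_derivative[OF bounded_linear_transpose] has_derivative_ident]
    by blast
  from bounded_bilinear.FDERIV[OF bounded_bilinear_matrix_mult this has_derivative_const[of M]]
  show ?thesis by (simp add: add.commute)
qed

text \<open>\<open>W\<close> is differentiable on \<open>GL\<^sup>+(3)\<close>, being locally equal to \<open>Y \<mapsto> W\<^sup>~ (Y\<^sup>T Y)\<close>.\<close>
lemma W_differentiable:
  assumes C1: "C1_on posR3 \<Psi>"
    and W_Psi: "\<forall>Fe. det Fe > 0 \<longrightarrow>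
        W Fe = \<Psi> (I1 (transpose Fe ** Fe), I2 (transpose Fe ** Fe), I3 (transpose Fe ** Fe))"
    and Y0: "det Y0 > 0"
  shows "W differentiable (at Y0)"
proof -
  have "invariants (transpose Y0 ** Y0) \<in> posR3"
    using invariants_pos gram_symmetric_pos_def Y0 by simp
  then have "Wtilde \<Psi> differentiable (at (transpose Y0 ** Y0 ** mat 1))"
    using Wtilde_differentiable[OF C1] by simp
  moreover have "(\<lambda>Y. transpose Y ** Y ** mat 1) differentiable (at Y0)"
    using gram_has_derivative unfolding differentiable_def by blast
  ultimately have "(\<lambda>Y. Wtilde \<Psi> (transpose Y ** Y ** mat 1)) differentiable (at Y0)"
    using differentiable_compose[of "Wtilde \<Psi>" "\<lambda>Y. transpose Y ** Y ** mat 1" Y0 UNIV] by simp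
  then obtain D where D: "((\<lambda>Y. Wtilde \<Psi> (transpose Y ** Y ** mat 1)) has_derivative D) (at Y0)"
    unfolding differentiable_def by blast
  have "(W has_derivative D) (at Y0)"
    by (rule has_derivative_transform_within_open[OF D open_det_pos])
       (use Y0 W_eq_Wtilde_gram[OF W_Psi] in auto)
  then show ?thesis unfolding differentiable_def by blast
qed

lemma grad_has_derivative:
  fixes f :: "mat3 \<Rightarrow> real"
  assumes "f differentiable (at X)"
  shows "(f has_derivative (\<lambda>H. grad f X \<bullet> H)) (at X)"
proof -
  obtain D where D: "(f has_derivative D) (at X)" using assms unfolding differentiable_def by blast
  have lin: "linear D" using has_derivative_bounded_linear[OF D] bounded_linear.linear by blast
  define G where "G = (\<Sum>b\<in>Basis. D b *\<^sub>R b)"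
  have "D = (\<lambda>H. G \<bullet> H)"
  proof
    fix H
    have "D H = D (\<Sum>b\<in>Basis. (H \<bullet> b) *\<^sub>R b)" by (simp add: euclidean_representation)
    also have "\<dots> = (\<Sum>b\<in>Basis. D ((H \<bullet> b) *\<^sub>R b))"
      by (subst linear_sum[OF lin]) (simp add: o_def)
    also have "\<dots> = (\<Sum>b\<in>Basis. (H \<bullet> b) * D b)" using linear_scale[OF lin] by simp
    also have "\<dots> = G \<bullet> H" unfolding G_def inner_sum_left
      by (simp add: inner_commute[of H] mult.commute)
    finally show "D H = G \<bullet> H" .
  qed
  then have P: "(f has_derivative (\<lambda>H. G \<bullet> H)) (at X)" using D by simp
  have "grad f X = G" unfolding grad_def
  proof (rule the_equality)
    fix G' assume "(f has_derivative (\<lambda>H. G' \<bullet> H)) (at X)"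
    then have "(\<lambda>H. G' \<bullet> H) = (\<lambda>H. G \<bullet> H)" using has_derivative_unique P by blast
    then show "G' = G" by (simp add: fun_eq_iff vector_eq_rdot)
  qed (rule P)
  then show ?thesis using P by simp
qed

lemma grad_directional_derivative:
  fixes f :: "mat3 \<Rightarrow> real"
  assumes "f differentiable (at X)"
  shows "((\<lambda>t::real. f (X + t *\<^sub>R V)) has_derivative (\<lambda>t. t * (grad f X \<bullet> V))) (at 0)"
proof -
  have line: "((\<lambda>t::real. X + t *\<^sub>R V) has_derivative (\<lambda>t. t *\<^sub>R V)) (at 0)"
    by (auto intro!: derivative_eq_intros)
  have "(f has_derivative (\<lambda>H. grad f X \<bullet> H)) (at ((\<lambda>t::real. X + t *\<^sub>R V) 0))"
    using grad_has_derivative[OF assms] by simp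
  from diff_chain_at[OF line this] show ?thesis by (simp add: o_def)
qed

text \<open>If \<open>f (A B) = f (B A)\<close> for all \<open>A, B\<close>, then the directional derivatives of \<open>f\<close> at \<open>X\<close>
  along \<open>K X\<close> and \<open>X K\<close> agree, because \<open>X + t K X = (1 + t K) X\<close> and
  \<open>X + t X K = X (1 + t K)\<close>.\<close>
lemma grad_commutes_with_transpose:
  fixes f :: "mat3 \<Rightarrow> real"
  assumes swap: "\<And>A B. f (A ** B) = f (B ** A)" and diff: "f differentiable (at X)"
  shows "grad f X ** transpose X = transpose X ** grad f X"
proof -
  have "(grad f X ** transpose X) \<bullet> K = (transpose X ** grad f X) \<bullet> K" for K
  proof -
    have "X + t *\<^sub>R (K ** X) = (mat 1 + t *\<^sub>R K) ** X"
      and "X + t *\<^sub>R (X ** K) = X ** (mat 1 + t *\<^sub>R K)" for t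
      by (simp_all add: matrix_mul_add_rdistrib matrix_add_ldistrib scalar_matrix_assoc matrix_scalar_ac)
    then have "(\<lambda>t. f (X + t *\<^sub>R (K ** X))) = (\<lambda>t. f (X + t *\<^sub>R (X ** K)))"
      using swap by (simp add: fun_eq_iff)
    then have "(\<lambda>t. t * (grad f X \<bullet> (K ** X))) = (\<lambda>t. t * (grad f X \<bullet> (X ** K)))"
      using has_derivative_unique grad_directional_derivative[OF diff] by metis
    then have "grad f X \<bullet> (K ** X) = grad f X \<bullet> (X ** K)" by (metis mult_1)
    moreover have "grad f X \<bullet> (K ** X) = (grad f X ** transpose X) \<bullet> K"
      by (rule inner_matrix_mult_left)
    moreover have "grad f X \<bullet> (X ** K) = (transpose X ** grad f X) \<bullet> K"
      by (rule inner_matrix_mult_right)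
    ultimately show ?thesis by simp
  qed
  then show ?thesis using vector_eq_rdot by blast
qed

text \<open>Turning an identity between linear functionals of \<open>H\<close> into a matrix identity by
  moving all factors onto the other side of the Frobenius product.\<close>
lemma frobenius_identity_to_matrix:
  fixes P N F G S :: mat3
  assumes "\<And>H. P \<bullet> (H ** N) = G \<bullet> ((transpose H ** F + transpose F ** H) ** S)"
  shows "P ** transpose N = F ** S ** transpose G + F ** G ** transpose S"
proof -
  have "(P ** transpose N) \<bullet> H = (F ** S ** transpose G + F ** G ** transpose S) \<bullet> H" for H
  proof -
    have "G \<bullet> (transpose H ** (F ** S)) = (G ** transpose (F ** S)) \<bullet> transpose H"
      by (rule inner_matrix_mult_left)
    also have "\<dots> = transpose (G ** transpose (F ** S)) \<bullet> H"
      by (rule inner_matrix_transpose)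
    also have "\<dots> = (F ** S ** transpose G) \<bullet> H"
      by (simp add: matrix_transpose_mul)
    finally have first: "G \<bullet> (transpose H ** (F ** S)) = (F ** S ** transpose G) \<bullet> H" .
    have "G \<bullet> (transpose F ** (H ** S)) = (transpose (transpose F) ** G) \<bullet> (H ** S)"
      by (rule inner_matrix_mult_right)
    also have "\<dots> = (F ** G ** transpose S) \<bullet> H"
      unfolding transpose_transpose by (rule inner_matrix_mult_left)
    finally have second: "G \<bullet> (transpose F ** (H ** S)) = (F ** G ** transpose S) \<bullet> H" .
    have "(transpose H ** F + transpose F ** H) ** S
        = transpose H ** (F ** S) + transpose F ** (H ** S)"
      by (simp add: matrix_mul_add_rdistrib matrix_mul_assoc)
    then have "P \<bullet> (H ** N) = (F ** S ** transpose G + F ** G ** transpose S) \<bullet> H"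
      using assms[of H] first second by (simp only: inner_add_left inner_add_right)
    moreover have "P \<bullet> (H ** N) = (P ** transpose N) \<bullet> H" by (rule inner_matrix_mult_left)
    ultimately show ?thesis by simp
  qed
  then show ?thesis using vector_eq_rdot by blast
qed

subsection \<open>Representation of the stresses\<close>

lemma invariants_pullback:
  fixes Y Fp :: mat3
  assumes "det Fp \<noteq> 0"
  shows "invariants (transpose Y ** Y ** matrix_inv (transpose Fp ** Fp))
       = invariants (transpose (Y ** matrix_inv Fp) ** (Y ** matrix_inv Fp))"
proof -
  have "transpose Y ** Y ** matrix_inv (transpose Fp ** Fp)
      = (transpose Y ** Y ** matrix_inv Fp) ** transpose (matrix_inv Fp)"
    using assms by (simp add: inverse_gram matrix_mul_assoc)
  moreover have "transpose (matrix_inv Fp) ** (transpose Y ** Y ** matrix_inv Fp)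
      = transpose (Y ** matrix_inv Fp) ** (Y ** matrix_inv Fp)"
    by (simp add: matrix_transpose_mul matrix_mul_assoc)
  ultimately show ?thesis using invariants_commute by metis
qed

lemma Wtilde_differentiable_pullback:
  assumes C1: "C1_on posR3 \<Psi>" and dF: "det F > 0" and dFp: "det Fp > 0"
  shows "Wtilde \<Psi> differentiable (at (transpose F ** F ** matrix_inv (transpose Fp ** Fp)))"
proof (rule Wtilde_differentiable[OF C1])
  have "det (F ** matrix_inv Fp) > 0" using dF det_matrix_inv_pos[OF dFp] by (simp add: det_mul)
  then show "invariants (transpose F ** F ** matrix_inv (transpose Fp ** Fp)) \<in> posR3"
    using dFp invariants_pullback invariants_pos gram_symmetric_pos_def by simp
qed

text \<open>The chain rule applied in two ways to \<open>Y \<mapsto> W (Y F\<^sub>p\<^sup>-\<^sup>1) = W\<^sup>~ (Y\<^sup>T Y C\<^sub>p\<^sup>-\<^sup>1)\<close> at \<open>Y = F\<close>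
  expresses \<open>DW(F\<^sub>e)\<close> through \<open>G = DW\<^sup>~(C C\<^sub>p\<^sup>-\<^sup>1)\<close>.\<close>
lemma grad_W_pullback:
  assumes C1: "C1_on posR3 \<Psi>"
    and W_Psi: "\<forall>Fe. det Fe > 0 \<longrightarrow>
        W Fe = \<Psi> (I1 (transpose Fe ** Fe), I2 (transpose Fe ** Fe), I3 (transpose Fe ** Fe))"
    and dF: "det F > 0" and dFp: "det Fp > 0"
  defines "Fpi \<equiv> matrix_inv Fp" and "Cpi \<equiv> matrix_inv (transpose Fp ** Fp)"
    and "G \<equiv> grad (Wtilde \<Psi>) (transpose F ** F ** matrix_inv (transpose Fp ** Fp))"
  shows "grad W (F ** Fpi) ** transpose Fpi = F ** Cpi ** transpose G + F ** G ** Cpi"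
proof -
  have dFpi: "det Fpi > 0" unfolding Fpi_def using dFp by (rule det_matrix_inv_pos)
  have pullback: "Wtilde \<Psi> (transpose Y ** Y ** Cpi) = W (Y ** Fpi)" if "det Y > 0" for Y
    using W_eq_Wtilde_gram[OF W_Psi] that dFpi invariants_pullback[of Fp Y] dFp
    unfolding Cpi_def Fpi_def by (simp add: det_mul Wtilde_invariants)
  have dFe: "det (F ** Fpi) > 0" using dF dFpi by (simp add: det_mul)
  have G_deriv: "(Wtilde \<Psi> has_derivative (\<lambda>H. G \<bullet> H)) (at (transpose F ** F ** Cpi))"
    unfolding G_def Cpi_def
    by (intro grad_has_derivative Wtilde_differentiable_pullback[OF C1 dF dFp])
  have W_deriv: "(W has_derivative (\<lambda>H. grad W (F ** Fpi) \<bullet> H)) (at (F ** Fpi))"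
    by (intro grad_has_derivative W_differentiable[OF C1 W_Psi dFe])
  have D1: "((\<lambda>Y. W (Y ** Fpi)) has_derivative (\<lambda>H. grad W (F ** Fpi) \<bullet> (H ** Fpi))) (at F)"
    using diff_chain_at[OF bounded_linear_imp_has_derivative[OF
          bounded_bilinear.bounded_linear_left[OF bounded_bilinear_matrix_mult]] W_deriv]
    by (simp add: o_def)
  have "((\<lambda>Y. Wtilde \<Psi> (transpose Y ** Y ** Cpi)) has_derivative
          (\<lambda>H. G \<bullet> ((transpose H ** F + transpose F ** H) ** Cpi))) (at F)"
    using diff_chain_at[OF gram_has_derivative G_deriv] by (simp add: o_def)
  then have D2: "((\<lambda>Y. W (Y ** Fpi)) has_derivative
          (\<lambda>H. G \<bullet> ((transpose H ** F + transpose F ** H) ** Cpi))) (at F)"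
    by (rule has_derivative_transform_within_open[OF _ open_det_pos]) (use dF pullback in auto)
  have "grad W (F ** Fpi) \<bullet> (H ** Fpi) = G \<bullet> ((transpose H ** F + transpose F ** H) ** Cpi)" for H
    using has_derivative_unique[OF D1 D2] by metis
  moreover have "transpose Cpi = Cpi"
    unfolding Cpi_def using dFp by (simp add: inverse_gram matrix_transpose_mul)
  ultimately show ?thesis using frobenius_identity_to_matrix[of "grad W (F ** Fpi)" Fpi G F Cpi]
    by simp
qed

text \<open>Besides the pullback formula this uses \<open>G (C C\<^sub>p\<^sup>-\<^sup>1)\<^sup>T = (C C\<^sub>p\<^sup>-\<^sup>1)\<^sup>T G\<close>.\<close>
lemma Sigma_e_formula:
  assumes C1: "C1_on posR3 \<Psi>"
    and W_Psi: "\<forall>Fe. det Fe > 0 \<longrightarrow>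
        W Fe = \<Psi> (I1 (transpose Fe ** Fe), I2 (transpose Fe ** Fe), I3 (transpose Fe ** Fe))"
    and dF: "det F > 0" and dFp: "det Fp > 0"
  defines "C \<equiv> transpose F ** F" and "Fpi \<equiv> matrix_inv Fp"
    and "G \<equiv> grad (Wtilde \<Psi>) (transpose F ** F ** matrix_inv (transpose Fp ** Fp))"
  shows "Sigma_e W F Fp = transpose Fpi ** (transpose G ** C + C ** G) ** Fpi"
proof -
  define Cpi where "Cpi = matrix_inv (transpose Fp ** Fp)"
  have Cpi: "Cpi = Fpi ** transpose Fpi"
    unfolding Cpi_def Fpi_def using dFp by (simp add: inverse_gram)
  have inv: "Fp ** Fpi = mat 1" unfolding Fpi_def using dFp matrix_inv_det[of Fp] by simp
  have "transpose Fpi ** transpose Fp = transpose (Fp ** Fpi)" by (simp add: matrix_transpose_mul)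
  then have tinv: "transpose Fpi ** transpose Fp = mat 1" using inv by simp
  have "transpose (C ** Cpi) ** G = G ** transpose (C ** Cpi)"
    using grad_commutes_with_transpose[OF Wtilde_commute Wtilde_differentiable_pullback[OF C1 dF dFp]]
    unfolding G_def C_def Cpi_def by simp
  then have "transpose (transpose (C ** Cpi) ** G) = transpose (G ** transpose (C ** Cpi))"
    by simp
  then have comm: "C ** Cpi ** transpose G = transpose G ** C ** Cpi"
    by (simp only: matrix_transpose_mul transpose_transpose matrix_mul_assoc)
  have gW: "grad W (F ** Fpi) = (F ** Cpi ** transpose G + F ** G ** Cpi) ** transpose Fp"
  proof -
    have "grad W (F ** Fpi) = (grad W (F ** Fpi) ** transpose Fpi) ** transpose Fp"
      using tinv by (simp add: matrix_mul_assoc[symmetric])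
    then show ?thesis
      using grad_W_pullback[OF C1 W_Psi dF dFp] unfolding Fpi_def Cpi_def G_def by simp
  qed
  have "Sigma_e W F Fp = transpose Fpi ** (transpose F ** grad W (F ** Fpi))"
    by (simp add: Sigma_e_def Let_def matrix_transpose_mul matrix_mul_assoc Fpi_def)
  also have "transpose F ** grad W (F ** Fpi) = (transpose G ** C + C ** G) ** (Cpi ** transpose Fp)"
    unfolding gW using comm
    by (simp add: C_def matrix_add_ldistrib matrix_mul_add_rdistrib matrix_mul_assoc)
  also have "Cpi ** transpose Fp = Fpi"
    unfolding Cpi using tinv by (simp add: matrix_mul_assoc[symmetric])
  finally show ?thesis by (simp add: matrix_mul_assoc)
qed

lemma Sigma_ring_formula:
  fixes F Cp :: mat3 and \<Psi> :: "real \<times> real \<times> real \<Rightarrow> real"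
  defines "C \<equiv> transpose F ** F" and "Ui \<equiv> matrix_inv (msqrt Cp)"
    and "G \<equiv> grad (Wtilde \<Psi>) (transpose F ** F ** matrix_inv Cp)"
  shows "Sigma_ring \<Psi> C Cp = Ui ** (transpose G ** C + C ** G) ** Ui"
proof -
  have "sym (C ** G) = (1/2) *\<^sub>R (transpose G ** C + C ** G)"
    unfolding sym_def C_def by (simp add: matrix_transpose_mul add.commute)
  moreover have "grad (Wtilde \<Psi>) (C ** matrix_inv Cp) = G" by (simp add: G_def C_def)
  ultimately show ?thesis
    unfolding Sigma_ring_def Let_def Ui_def[symmetric]
    by (simp add: matrix_scalar_ac scalar_matrix_assoc)
qed

lemma polar_rotation:
  fixes Fp :: mat3
  assumes dFp: "det Fp \<noteq> 0"
  defines "U \<equiv> msqrt (transpose Fp ** Fp)" and "Fpi \<equiv> matrix_inv Fp"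
  defines "R \<equiv> transpose Fpi ** U"
  shows "orthogonal_matrix R"
    and "transpose Fpi ** M ** Fpi = R ** (matrix_inv U ** M ** matrix_inv U) ** transpose R"
    and "Fpi ** R = matrix_inv U"
proof -
  note U = msqrt_gram[OF dFp, folded U_def]
  have Cpi: "Fpi ** transpose Fpi = matrix_inv U ** matrix_inv U"
    using U(5) inverse_gram[OF dFp] unfolding Fpi_def by simp
  have Rt: "transpose R = U ** Fpi" unfolding R_def using U(1) by (simp add: matrix_transpose_mul)
  have "transpose R ** R = U ** (Fpi ** transpose Fpi) ** U"
    unfolding Rt by (simp add: R_def matrix_mul_assoc)
  also have "\<dots> = (U ** matrix_inv U) ** (matrix_inv U ** U)"
    unfolding Cpi by (simp add: matrix_mul_assoc)
  finally show "orthogonal_matrix R" using U(2,3) by (simp add: orthogonal_matrix)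
  show "transpose Fpi ** M ** Fpi = R ** (matrix_inv U ** M ** matrix_inv U) ** transpose R"
  proof -
    have "R ** (matrix_inv U ** M ** matrix_inv U) ** transpose R
        = transpose Fpi ** (U ** matrix_inv U) ** M ** (matrix_inv U ** U) ** Fpi"
      unfolding Rt by (simp add: R_def matrix_mul_assoc)
    then show ?thesis using U(2,3) by simp
  qed
  have "Fpi ** R = (matrix_inv U ** matrix_inv U) ** U"
    unfolding R_def Cpi[symmetric] by (simp add: matrix_mul_assoc)
  also have "\<dots> = matrix_inv U" using U(3) by (simp add: matrix_mul_assoc[symmetric])
  finally show "Fpi ** R = matrix_inv U" .
qed

subsection \<open>The normal cone under orthogonal conjugation\<close>

lemma trace_orthogonal_conj:
  fixes R S :: "real^'n^'n"
  assumes "orthogonal_matrix R"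
  shows "trace (R ** S ** transpose R) = trace S"
  using assms trace_mul_sym[of "R ** S" "transpose R"]
  by (simp add: orthogonal_matrix_def matrix_mul_assoc)

lemma norm_orthogonal_conj:
  fixes R D :: "real^'n^'n"
  assumes oR: "orthogonal_matrix R"
  shows "norm (R ** D ** transpose R) = norm D"
proof -
  have "(R ** D ** transpose R) \<bullet> (R ** D ** transpose R)
      = trace (R ** (transpose D ** (transpose R ** R) ** D) ** transpose R)"
    by (simp add: inner_matrix_trace matrix_transpose_mul matrix_mul_assoc)
  also have "\<dots> = D \<bullet> D"
    using oR trace_orthogonal_conj[OF oR, of "transpose D ** D"]
    by (simp add: orthogonal_matrix_def inner_matrix_trace)
  finally show ?thesis by (simp add: norm_eq_sqrt_inner)
qed

lemma dev3_orthogonal_conj: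
  fixes R S :: mat3
  assumes oR: "orthogonal_matrix R"
  shows "dev3 (R ** S ** transpose R) = R ** dev3 S ** transpose R"
proof -
  have "R ** dev3 S ** transpose R
      = R ** S ** transpose R - (trace S / 3) *\<^sub>R (R ** transpose R)"
    unfolding dev3_def
    by (simp add: matrix_mul_diff_ldistrib matrix_mul_diff_rdistrib matrix_scalar_ac scalar_matrix_assoc)
  then show ?thesis
    using oR unfolding dev3_def trace_orthogonal_conj[OF oR] by (simp add: orthogonal_matrix_def)
qed

text \<open>The normal cone \<open>\<N>\<^sub>r\<close> is equivariant under orthogonal conjugation, since \<open>dev\<^sub>3\<close>
  commutes with it and the Frobenius norm is invariant.\<close>
lemma Ncone_orthogonal_conj:
  fixes R S :: mat3
  assumes oR: "orthogonal_matrix R"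
  shows "Ncone r (R ** S ** transpose R) = (\<lambda>X. R ** X ** transpose R) ` Ncone r S"
proof -
  have scale: "R ** (c *\<^sub>R Y) ** transpose R = c *\<^sub>R (R ** Y ** transpose R)" for c Y
    by (simp add: matrix_scalar_ac scalar_matrix_assoc)
  have nd: "norm (dev3 (R ** S ** transpose R)) = norm (dev3 S)"
    by (simp add: dev3_orthogonal_conj[OF oR] norm_orthogonal_conj[OF oR])
  have ray: "{c *\<^sub>R (Z::mat3) | c. c \<ge> 0} = (\<lambda>c. c *\<^sub>R Z) ` {0..}" for Z by auto
  have "(\<lambda>X. R ** X ** transpose R) ` ((\<lambda>c. c *\<^sub>R (dev3 S /\<^sub>R norm (dev3 S))) ` {0..})
      = (\<lambda>c. c *\<^sub>R (dev3 (R ** S ** transpose R) /\<^sub>R norm (dev3 (R ** S ** transpose R)))) ` {0..}"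
    unfolding image_image nd dev3_orthogonal_conj[OF oR] by (simp add: scale norm_orthogonal_conj[OF oR])
  then show ?thesis unfolding Ncone_def nd ray by auto
qed

subsection \<open>Equivalence of the flow rules\<close>

lemma neg_sandwich_iff:
  fixes U Ui d :: mat3
  assumes UUi: "U ** Ui = mat 1" and UiU: "Ui ** U = mat 1"
  shows "d \<in> neg_sandwich Ui N Ui \<longleftrightarrow> U ** d ** U \<in> (\<lambda>X. - X) ` N"
proof -
  have "U ** (Ui ** X ** Ui) ** U = (U ** Ui) ** X ** (Ui ** U)"
    and "Ui ** (U ** X ** U) ** Ui = (Ui ** U) ** X ** (U ** Ui)" for X
    by (simp_all add: matrix_mul_assoc)
  then have cancel: "U ** (Ui ** X ** Ui) ** U = X" "Ui ** (U ** X ** U) ** Ui = X" for X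
    using UUi UiU by simp_all
  show ?thesis
  proof
    assume "d \<in> neg_sandwich Ui N Ui"
    then obtain X where "X \<in> N" "d = - (Ui ** X ** Ui)" unfolding neg_sandwich_def by blast
    then show "U ** d ** U \<in> (\<lambda>X. - X) ` N"
      using cancel(1) by (simp add: matrix_mul_neg_left matrix_mul_neg_right)
  next
    assume "U ** d ** U \<in> (\<lambda>X. - X) ` N"
    then obtain X where "X \<in> N" "U ** d ** U = - X" by blast
    then have "d = - (Ui ** X ** Ui)"
      using cancel(2)[of d] by (simp add: matrix_mul_neg_left matrix_mul_neg_right)
    then show "d \<in> neg_sandwich Ui N Ui" using \<open>X \<in> N\<close> unfolding neg_sandwich_def by blast
  qed
qed

lemma flow_rule_sets_agree:
  assumes C1: "C1_on posR3 \<Psi>"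
    and W_Psi: "\<forall>Fe. det Fe > 0 \<longrightarrow>
        W Fe = \<Psi> (I1 (transpose Fe ** Fe), I2 (transpose Fe ** Fe), I3 (transpose Fe ** Fe))"
    and dF: "det F > 0" and dFp: "det Fp > 0"
  shows "neg_sandwich (matrix_inv Fp) (Ncone r (Sigma_e W F Fp)) (transpose (matrix_inv Fp))
       = neg_sandwich (matrix_inv (msqrt (transpose Fp ** Fp)))
           (Ncone r (Sigma_ring \<Psi> (transpose F ** F) (transpose Fp ** Fp)))
           (matrix_inv (msqrt (transpose Fp ** Fp)))"
proof -
  define Fpi where "Fpi = matrix_inv Fp"
  define Ui where "Ui = matrix_inv (msqrt (transpose Fp ** Fp))"
  define R where "R = transpose Fpi ** msqrt (transpose Fp ** Fp)"
  define Sr where "Sr = Sigma_ring \<Psi> (transpose F ** F) (transpose Fp ** Fp)"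
  have nz: "det Fp \<noteq> 0" using dFp by simp
  note rot = polar_rotation[OF nz, folded Fpi_def, folded R_def Ui_def]
  have "Sigma_e W F Fp = R ** Sr ** transpose R"
    unfolding Sigma_e_formula[OF C1 W_Psi dF dFp] Sr_def Sigma_ring_formula
    using rot(2) unfolding Fpi_def Ui_def by simp
  then have cone: "Ncone r (Sigma_e W F Fp) = (\<lambda>X. R ** X ** transpose R) ` Ncone r Sr"
    using Ncone_orthogonal_conj[OF rot(1)] by simp
  have "transpose R ** transpose Fpi = Ui"
    using rot(3) msqrt_gram(4)[OF nz] unfolding Ui_def
    by (metis matrix_transpose_mul)
  moreover have "Fpi ** (R ** X ** transpose R) ** transpose Fpi
      = (Fpi ** R) ** X ** (transpose R ** transpose Fpi)" for X
    by (simp add: matrix_mul_assoc)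
  ultimately have "Fpi ** (R ** X ** transpose R) ** transpose Fpi = Ui ** X ** Ui" for X
    using rot(3) by simp
  then show ?thesis
    unfolding neg_sandwich_def cone Fpi_def[symmetric] Ui_def[symmetric] Sr_def[symmetric] image_image
    by simp
qed

theorem mainTheorem9:
  fixes \<Psi> :: "real \<times> real \<times> real \<Rightarrow> real"
    and W :: "mat3 \<Rightarrow> real"
    and r :: real and F Fp :: mat3
    and Fpt :: "real \<Rightarrow> mat3"
  assumes Psi_C1: "C1_on posR3 \<Psi>"
    and W_Psi: "\<forall>Fe. det Fe > 0 \<longrightarrow>
        W Fe = \<Psi> (I1 (transpose Fe ** Fe), I2 (transpose Fe ** Fe), I3 (transpose Fe ** Fe))"
    and W_obj_iso: "\<forall>Fe Q R. det Fe > 0 \<longrightarrow> Q \<in> SO3 \<longrightarrow> R \<in> SO3 \<longrightarrow> W (Q ** Fe ** R) = W Fe"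
    and r_pos: "r > 0"
    and F_GL: "det F > 0"
    and Fp_GL: "det Fp > 0"
    and Fpt_GL: "\<forall>t. det (Fpt t) > 0"
    and Fpt_diff: "\<forall>t. Fpt differentiable (at t)"
  shows "neg_sandwich (matrix_inv Fp) (Ncone r (Sigma_e W F Fp)) (transpose (matrix_inv Fp))
           = neg_sandwich (matrix_inv (msqrt (transpose Fp ** Fp)))
               (Ncone r (Sigma_ring \<Psi> (transpose F ** F) (transpose Fp ** Fp)))
               (matrix_inv (msqrt (transpose Fp ** Fp)))
       \<and> (\<forall>t. let Cp = transpose (Fpt t) ** Fpt t;
                 dCpinv = vector_derivative (\<lambda>s. matrix_inv (transpose (Fpt s) ** Fpt s)) (at t)
             in (dCpinv \<in> neg_sandwich (matrix_inv (Fpt t)) (Ncone r (Sigma_e W F (Fpt t)))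
                             (transpose (matrix_inv (Fpt t))))
                \<longleftrightarrow> (msqrt Cp ** dCpinv ** msqrt Cp
                       \<in> (\<lambda>X. - X) ` Ncone r (Sigma_ring \<Psi> (transpose F ** F) Cp)))"
proof (intro conjI allI)
  show "neg_sandwich (matrix_inv Fp) (Ncone r (Sigma_e W F Fp)) (transpose (matrix_inv Fp))
      = neg_sandwich (matrix_inv (msqrt (transpose Fp ** Fp)))
          (Ncone r (Sigma_ring \<Psi> (transpose F ** F) (transpose Fp ** Fp)))
          (matrix_inv (msqrt (transpose Fp ** Fp)))"
    by (rule flow_rule_sets_agree[OF Psi_C1 W_Psi F_GL Fp_GL])
  fix t
  have dt: "det (Fpt t) > 0" using Fpt_GL by blast
  then have "det (Fpt t) \<noteq> 0" by simp
  note U = msqrt_gram[OF this]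
  show "let Cp = transpose (Fpt t) ** Fpt t;
            dCpinv = vector_derivative (\<lambda>s. matrix_inv (transpose (Fpt s) ** Fpt s)) (at t)
        in (dCpinv \<in> neg_sandwich (matrix_inv (Fpt t)) (Ncone r (Sigma_e W F (Fpt t)))
                        (transpose (matrix_inv (Fpt t))))
           \<longleftrightarrow> (msqrt Cp ** dCpinv ** msqrt Cp
                  \<in> (\<lambda>X. - X) ` Ncone r (Sigma_ring \<Psi> (transpose F ** F) Cp))"
    unfolding Let_def flow_rule_sets_agree[OF Psi_C1 W_Psi F_GL dt]
    by (rule neg_sandwich_iff[OF U(2,3)])
qed

end
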